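(* Let $T$ and $A$ be as in the context, and suppose $(ATA)^{-1}$ is Lipschitz continuous at zero. Let $\{(x_k,w_k)\}$ be an infinite sequence generated by the IPHA. Then $\{(x_k,w_k)\}$ converges linearly (to a solution of the SVI in extensive form) in the norm $\|(x,w)\|_{M_r}=\sqrt{\|x\|^2+r^{-2}\|w\|^2}$.
   Context: Multistage setting: $\Xi$ is a finite set of scenarios $\xi=(\xi_1,\dots,\xi_N)$ with probabilities $p(\xi)>0$; $n=n_1+\dots+n_N$. $\mathcal L_n$ is the space of functions $x:\Xi\to\mathbb R^n$, $x(\xi)=(x_1(\xi),\dots,x_N(\xi))$, $x_j(\xi)\in\mathbb R^{n_j}$, with inner product $\langle x,w\rangle=\sum_{\xi}p(\xi)\sum_{j}\langle x_j(\xi),w_j(\xi)\rangle$ and norm $\|\cdot\|$. $\mathcal N=\{x\in\mathcal L_n: x_j(\xi)\text{ does not depend on }\xi_j,\dots,\xi_N\}$, $\mathcal M=\mathcal N^\perp$, with orthogonal projections $P_{\mathcal N},P_{\mathcal M}$. For each $\xi$, $C(\xi)\subset\mathbb R^n$ is nonempty closed convex and $F(\cdot,\xi):\mathbb R^n\to\mathbb R^n$ is continuous monotone; $\mathcal C=\{x\in\mathcal L_n: x(\xi)\in C(\xi)\ \forall\xi\}$ and $\mathcal F(x)(\xi)=F(x(\xi),\xi)$. $r>0$ fixed. SVI in extensive form: find $x\in\mathcal N$, $w\in\mathcal M$ with $-F(x(\xi),\xi)-w(\xi)\in N_{C(\xi)}(x(\xi))$ for all $\xi$. $T:\mathcal L_n\rightrightarrows\mathcal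 L_n$ is defined by $z\in T(y)\iff P_{\mathcal N}(z)+P_{\mathcal M}(y)\in(\mathcal F+N_{\mathcal C})(P_{\mathcal N}(y)+P_{\mathcal M}(z))$, and $A(u)=P_{\mathcal N}(u)+rP_{\mathcal M}(u)$. A set-valued map $S$ with $S^{-1}=(ATA)^{-1}$ is Lipschitz continuous at zero if $S(0)=\{z^*\}$ is a singleton and there are $L,\eta>0$ with $\|z-z^*\|\le L\|v\|$ whenever $z\in S(v)$, $\|v\|\le\eta$. IPHA: choose $x_0\in\mathcal N$, $w_0\in\mathcal M$, $\bar\sigma\in(0,1)$, $\theta\in(0,1)$. At iteration $k$: choose $\sigma_k\in[0,\bar\sigma)$, find $\hat x^k,\hat w^k\in\mathcal L_n$ with $r(x_k(\xi)-\hat x^k(\xi))-w_k(\xi)\in F(\hat w^k(\xi),\xi)+N_{C(\xi)}(\hat w^k(\xi))$ for all $\xi$, $\delta^k=\hat w^k-\hat x^k$, and $\|\delta^k\|^2\le\sigma_k^2(\|a_k\|^2+\|b_k\|^2)$, where $a_k=x_k-P_{\mathcal N}(\hat x^k)+P_{\mathcal M}(\hat w^k)$, $b_k=x_k-P_{\mathcal N}(\hat w^k)+P_{\mathcal M}(\hat x^k)$. If $b_k=0$ stop; otherwise choose $\tau_k\in[1-\theta,1+\theta]$, set $\alpha_k=\langle a_k,b_k\rangle/\|a_k\|^2$, $x_{k+1}=x_k-\tau_k\alpha_k(x_k-P_{\mathcal N}(\hat x^k))$, $w_{k+1}=w_k+\tau_k\alpha_k rP_{\mathcal M}(\hat w^k)$.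 *)

theory Defs
  imports "HOL-Analysis.Analysis"
begin

text \<open>Scenarios are functions xi :: nat => 'e, the stage-i component being xi i
  (i = 1..N). Decisions live in real^'n; each coordinate k belongs to the stage
  block stg k in {1..N} (so n = n_1 + ... + n_N). Elements of L_n are functions
  from scenarios to real^'n which vanish outside the scenario set Xi.\<close>

type_synonym ('e, 'n) Lfun = "(nat \<Rightarrow> 'e) \<Rightarrow> real^'n"

definition ip :: "(nat \<Rightarrow> 'e) set \<Rightarrow> ((nat \<Rightarrow> 'e) \<Rightarrow> real) \<Rightarrow> ('e,'n::finite) Lfun \<Rightarrow> ('e,'n::finite) Lfun \<Rightarrow> real" where
  "ip Xi p x w = (\<Sum>\<xi>\<in>Xi. p \<xi> * (x \<xi> \<bullet> w \<xi>))"

definition Lnorm :: "(nat \<Rightarrow> 'e) set \<Rightarrow> ((nat \<Rightarrow> 'e) \<Rightarrow> real) \<Rightarrow> ('e,'n::finite) Lfun \<Rightarrow> real" where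
  "Lnorm Xi p x = sqrt (ip Xi p x x)"

definition Lsp :: "(nat \<Rightarrow> 'e) set \<Rightarrow> ('e,'n::finite) Lfun set" where
  "Lsp Xi = {x. \<forall>\<xi>. \<xi> \<notin> Xi \<longrightarrow> x \<xi> = 0}"

definition NAsp :: "(nat \<Rightarrow> 'e) set \<Rightarrow> ('n \<Rightarrow> nat) \<Rightarrow> ('e,'n::finite) Lfun set" where
  "NAsp Xi stg = {x \<in> Lsp Xi. \<forall>\<xi>\<in>Xi. \<forall>\<xi>'\<in>Xi. \<forall>k.
      (\<forall>i. 1 \<le> i \<and> i < stg k \<longrightarrow> \<xi> i = \<xi>' i) \<longrightarrow> x \<xi> $ k = x \<xi>' $ k}"

definition Msp :: "(nat \<Rightarrow> 'e) set \<Rightarrow> ((nat \<Rightarrow> 'e) \<Rightarrow> real) \<Rightarrow> ('n \<Rightarrow> nat) \<Rightarrow> ('e,'n::finite) Lfun set" where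
  "Msp Xi p stg = {w \<in> Lsp Xi. \<forall>x\<in>NAsp Xi stg. ip Xi p x w = 0}"

definition oproj :: "(nat \<Rightarrow> 'e) set \<Rightarrow> ((nat \<Rightarrow> 'e) \<Rightarrow> real) \<Rightarrow> ('e,'n::finite) Lfun set \<Rightarrow> ('e,'n::finite) Lfun \<Rightarrow> ('e,'n::finite) Lfun" where
  "oproj Xi p S x = (THE y. y \<in> S \<and> (\<forall>z\<in>S. ip Xi p (\<lambda>\<xi>. x \<xi> - y \<xi>) z = 0))"

definition PN where "PN Xi p stg = oproj Xi p (NAsp Xi stg)"
definition PM where "PM Xi p stg = oproj Xi p (Msp Xi p stg)"

definition ncone :: "(real^'n::finite) set \<Rightarrow> real^'n \<Rightarrow> (real^'n) set" where
  "ncone C u = {v. u \<in> C \<and> (\<forall>c\<in>C. v \<bullet> (c - u) \<le> 0)}"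

definition Ccal :: "(nat \<Rightarrow> 'e) set \<Rightarrow> ((nat \<Rightarrow> 'e) \<Rightarrow> (real^'n::finite) set) \<Rightarrow> ('e,'n::finite) Lfun set" where
  "Ccal Xi C = {x \<in> Lsp Xi. \<forall>\<xi>\<in>Xi. x \<xi> \<in> C \<xi>}"

definition LNcone :: "(nat \<Rightarrow> 'e) set \<Rightarrow> ((nat \<Rightarrow> 'e) \<Rightarrow> real) \<Rightarrow> ('e,'n::finite) Lfun set \<Rightarrow> ('e,'n::finite) Lfun \<Rightarrow> ('e,'n::finite) Lfun set" where
  "LNcone Xi p S u = {v \<in> Lsp Xi. u \<in> S \<and> (\<forall>x\<in>S. ip Xi p v (\<lambda>\<xi>. x \<xi> - u \<xi>) \<le> 0)}"

definition Fcal :: "(nat \<Rightarrow> 'e) set \<Rightarrow> (real^'n \<Rightarrow> (nat \<Rightarrow> 'e) \<Rightarrow> real^'n::finite) \<Rightarrow> ('e,'n::finite) Lfun \<Rightarrow> ('e,'n::finite) Lfun" where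
  "Fcal Xi F x = (\<lambda>\<xi>. if \<xi> \<in> Xi then F (x \<xi>) \<xi> else 0)"

definition Top :: "(nat \<Rightarrow> 'e) set \<Rightarrow> ((nat \<Rightarrow> 'e) \<Rightarrow> real) \<Rightarrow> ('n \<Rightarrow> nat)
    \<Rightarrow> (real^'n \<Rightarrow> (nat \<Rightarrow> 'e) \<Rightarrow> real^'n::finite) \<Rightarrow> ((nat \<Rightarrow> 'e) \<Rightarrow> (real^'n) set)
    \<Rightarrow> ('e,'n::finite) Lfun \<Rightarrow> ('e,'n::finite) Lfun set" where
  "Top Xi p stg F C y = {z \<in> Lsp Xi.
     (let u = (\<lambda>\<xi>. PN Xi p stg y \<xi> + PM Xi p stg z \<xi>) in
      (\<exists>v \<in> LNcone Xi p (Ccal Xi C) u.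
         (\<lambda>\<xi>. PN Xi p stg z \<xi> + PM Xi p stg y \<xi>) = (\<lambda>\<xi>. Fcal Xi F u \<xi> + v \<xi>)))}"

definition Aop :: "(nat \<Rightarrow> 'e) set \<Rightarrow> ((nat \<Rightarrow> 'e) \<Rightarrow> real) \<Rightarrow> ('n \<Rightarrow> nat) \<Rightarrow> real
    \<Rightarrow> ('e,'n::finite) Lfun \<Rightarrow> ('e,'n::finite) Lfun" where
  "Aop Xi p stg r u = (\<lambda>\<xi>. PN Xi p stg u \<xi> + r *\<^sub>R PM Xi p stg u \<xi>)"

definition ATAinv :: "(nat \<Rightarrow> 'e) set \<Rightarrow> ((nat \<Rightarrow> 'e) \<Rightarrow> real) \<Rightarrow> ('n \<Rightarrow> nat) \<Rightarrow> real
    \<Rightarrow> (real^'n \<Rightarrow> (nat \<Rightarrow> 'e) \<Rightarrow> real^'n::finite) \<Rightarrow> ((nat \<Rightarrow> 'e) \<Rightarrow> (real^'n) set)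
    \<Rightarrow> ('e,'n::finite) Lfun \<Rightarrow> ('e,'n::finite) Lfun set" where
  "ATAinv Xi p stg r F C v =
     {z \<in> Lsp Xi. \<exists>y \<in> Top Xi p stg F C (Aop Xi p stg r z). v = Aop Xi p stg r y}"

definition lipschitz_at_zero :: "(nat \<Rightarrow> 'e) set \<Rightarrow> ((nat \<Rightarrow> 'e) \<Rightarrow> real)
    \<Rightarrow> (('e,'n::finite) Lfun \<Rightarrow> ('e,'n::finite) Lfun set) \<Rightarrow> bool" where
  "lipschitz_at_zero Xi p S \<longleftrightarrow> (\<exists>zs. S (\<lambda>_. 0) = {zs} \<and>
     (\<exists>L>0. \<exists>\<eta>>0. \<forall>v z. v \<in> Lsp Xi \<and> z \<in> S v \<and> Lnorm Xi p v \<le> \<eta> \<longrightarrow>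
        Lnorm Xi p (\<lambda>\<xi>. z \<xi> - zs \<xi>) \<le> L * Lnorm Xi p v))"

definition svi_solution where
  "svi_solution Xi p stg F C xs ws \<longleftrightarrow> xs \<in> NAsp Xi stg \<and> ws \<in> Msp Xi p stg \<and>
     (\<forall>\<xi>\<in>Xi. - F (xs \<xi>) \<xi> - ws \<xi> \<in> ncone (C \<xi>) (xs \<xi>))"

definition ipha_run :: "(nat \<Rightarrow> 'e) set \<Rightarrow> ((nat \<Rightarrow> 'e) \<Rightarrow> real) \<Rightarrow> ('n \<Rightarrow> nat) \<Rightarrow> real
    \<Rightarrow> (real^'n \<Rightarrow> (nat \<Rightarrow> 'e) \<Rightarrow> real^'n::finite) \<Rightarrow> ((nat \<Rightarrow> 'e) \<Rightarrow> (real^'n) set)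
    \<Rightarrow> real \<Rightarrow> real \<Rightarrow> (nat \<Rightarrow> real) \<Rightarrow> (nat \<Rightarrow> real)
    \<Rightarrow> (nat \<Rightarrow> ('e,'n::finite) Lfun) \<Rightarrow> (nat \<Rightarrow> ('e,'n::finite) Lfun)
    \<Rightarrow> (nat \<Rightarrow> ('e,'n::finite) Lfun) \<Rightarrow> (nat \<Rightarrow> ('e,'n::finite) Lfun) \<Rightarrow> bool" where
  "ipha_run Xi p stg r F C sbar \<theta> \<sigma> \<tau> x w xh wh \<longleftrightarrow>
     x 0 \<in> NAsp Xi stg \<and> w 0 \<in> Msp Xi p stg \<and> 0 < sbar \<and> sbar < 1 \<and> 0 < \<theta> \<and> \<theta> < 1 \<and>
     (\<forall>k. 0 \<le> \<sigma> k \<and> \<sigma> k < sbar \<and> xh k \<in> Lsp Xi \<and> wh k \<in> Lsp Xi \<and>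
        (\<forall>\<xi>\<in>Xi. \<exists>v \<in> ncone (C \<xi>) (wh k \<xi>).
            r *\<^sub>R (x k \<xi> - xh k \<xi>) - w k \<xi> = F (wh k \<xi>) \<xi> + v) \<and>
        (let \<delta> = (\<lambda>\<xi>. wh k \<xi> - xh k \<xi>);
             a = (\<lambda>\<xi>. x k \<xi> - PN Xi p stg (xh k) \<xi> + PM Xi p stg (wh k) \<xi>);
             b = (\<lambda>\<xi>. x k \<xi> - PN Xi p stg (wh k) \<xi> + PM Xi p stg (xh k) \<xi>);
             \<alpha> = ip Xi p a b / (Lnorm Xi p a)\<^sup>2
         in (Lnorm Xi p \<delta>)\<^sup>2 \<le> (\<sigma> k)\<^sup>2 * ((Lnorm Xi p a)\<^sup>2 + (Lnorm Xi p b)\<^sup>2) \<and>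
            b \<noteq> (\<lambda>_. 0) \<and>
            1 - \<theta> \<le> \<tau> k \<and> \<tau> k \<le> 1 + \<theta> \<and>
            x (Suc k) = (\<lambda>\<xi>. x k \<xi> - (\<tau> k * \<alpha>) *\<^sub>R (x k \<xi> - PN Xi p stg (xh k) \<xi>)) \<and>
            w (Suc k) = (\<lambda>\<xi>. w k \<xi> + (\<tau> k * \<alpha> * r) *\<^sub>R PM Xi p stg (wh k) \<xi>)))"

definition Mr_norm where
  "Mr_norm Xi p r x w = sqrt ((Lnorm Xi p x)\<^sup>2 + (Lnorm Xi p w)\<^sup>2 / r\<^sup>2)"

end

theory Submission
  imports Defs
begin

(*
  Write z_k = x_k - w_k / r. The IPHA update moves z_k by -tau_k alpha_k a_k, and the point
  z_k - b_k lies in (ATA)^(-1)(r a_k). Since F + N_C is monotone, so is (ATA)^(-1); comparing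
  z_k - b_k with the unique zs in (ATA)^(-1)(0) gives <a_k, z_k - b_k - zs> >= 0. Together with
  the relative error criterion this yields the Fejer-type descent
    |z_(k+1) - zs|^2 <= |z_k - zs|^2 - kappa (|a_k|^2 + |b_k|^2).
  Hence |a_k|^2 + |b_k|^2 is summable, r a_k eventually lies in the Lipschitz neighbourhood of 0,
  and there |z_k - zs|^2 <= 2 (1 + L^2 r^2) (|a_k|^2 + |b_k|^2). Both inequalities together give
  the contraction factor sqrt (1 - kappa / (2 (1 + L^2 r^2))). As x_k is nonanticipative and w_k is
  in M, |z_k - zs| is exactly the M_r-distance of (x_k, w_k) to the solution (P_N zs, -r P_M zs).
*)

lemma ip_commute: "ip Xi p x y = ip Xi p y x"
  unfolding ip_def by (simp add: inner_commute)

lemma ip_cong: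
  "(\<And>\<xi>. \<xi> \<in> Xi \<Longrightarrow> x \<xi> = x' \<xi>) \<Longrightarrow> (\<And>\<xi>. \<xi> \<in> Xi \<Longrightarrow> y \<xi> = y' \<xi>) \<Longrightarrow> ip Xi p x y = ip Xi p x' y'"
  unfolding ip_def by (intro sum.cong) auto

lemma ip_add_left: "ip Xi p (\<lambda>\<xi>. x \<xi> + y \<xi>) z = ip Xi p x z + ip Xi p y z"
  unfolding ip_def by (simp add: inner_add_left distrib_left sum.distrib)

lemma ip_diff_left: "ip Xi p (\<lambda>\<xi>. x \<xi> - y \<xi>) z = ip Xi p x z - ip Xi p y z"
  unfolding ip_def by (simp add: inner_diff_left right_diff_distrib sum_subtractf)

lemma ip_scaleR_left: "ip Xi p (\<lambda>\<xi>. c *\<^sub>R x \<xi>) z = c * ip Xi p x z"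
  unfolding ip_def by (simp add: sum_distrib_left algebra_simps)

lemma ip_zero_left: "ip Xi p (\<lambda>_. 0) z = 0"
  unfolding ip_def by simp

lemma ip_add_right: "ip Xi p z (\<lambda>\<xi>. x \<xi> + y \<xi>) = ip Xi p z x + ip Xi p z y"
  unfolding ip_def by (simp add: inner_add_right distrib_left sum.distrib)

lemma ip_diff_right: "ip Xi p z (\<lambda>\<xi>. x \<xi> - y \<xi>) = ip Xi p z x - ip Xi p z y"
  unfolding ip_def by (simp add: inner_diff_right right_diff_distrib sum_subtractf)

lemma ip_scaleR_right: "ip Xi p z (\<lambda>\<xi>. c *\<^sub>R x \<xi>) = c * ip Xi p z x"
  unfolding ip_def by (simp add: sum_distrib_left algebra_simps)

lemma ip_zero_right: "ip Xi p z (\<lambda>_. 0) = 0"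
  unfolding ip_def by simp

lemmas ip_bilinear = ip_add_left ip_diff_left ip_scaleR_left ip_zero_left
  ip_add_right ip_diff_right ip_scaleR_right ip_zero_right

lemma ip_self_diff:
  "ip Xi p (\<lambda>\<xi>. u \<xi> - v \<xi>) (\<lambda>\<xi>. u \<xi> - v \<xi>) = ip Xi p u u - 2 * ip Xi p u v + ip Xi p v v"
  by (simp add: ip_bilinear ip_commute[of Xi p v u])

lemma ip_self_diff_scaleR:
  "ip Xi p (\<lambda>\<xi>. u \<xi> - t *\<^sub>R v \<xi>) (\<lambda>\<xi>. u \<xi> - t *\<^sub>R v \<xi>)
    = ip Xi p u u - (2 * t * ip Xi p v u - t\<^sup>2 * ip Xi p v v)"
  by (simp add: ip_self_diff ip_scaleR_left ip_scaleR_right ip_commute[of Xi p u v] power2_eq_square)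

lemma Lsp_lincomb: "x \<in> Lsp Xi \<Longrightarrow> y \<in> Lsp Xi \<Longrightarrow> (\<lambda>\<xi>. a *\<^sub>R x \<xi> + b *\<^sub>R y \<xi>) \<in> Lsp Xi"
  unfolding Lsp_def by auto

lemma NAsp_lincomb:
  assumes "x \<in> NAsp Xi stg" and "y \<in> NAsp Xi stg"
  shows "(\<lambda>\<xi>. a *\<^sub>R x \<xi> + b *\<^sub>R y \<xi>) \<in> NAsp Xi stg"
  unfolding NAsp_def mem_Collect_eq
proof (intro conjI ballI allI impI)
  show "(\<lambda>\<xi>. a *\<^sub>R x \<xi> + b *\<^sub>R y \<xi>) \<in> Lsp Xi"
    using assms unfolding NAsp_def by (simp add: Lsp_lincomb)
  fix \<xi> \<xi>' k assume "\<xi> \<in> Xi" "\<xi>' \<in> Xi" "\<forall>i. 1 \<le> i \<and> i < stg k \<longrightarrow> \<xi> i = \<xi>' i"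
  then have "x \<xi> $ k = x \<xi>' $ k" "y \<xi> $ k = y \<xi>' $ k"
    using assms unfolding NAsp_def by blast+
  then show "(a *\<^sub>R x \<xi> + b *\<^sub>R y \<xi>) $ k = (a *\<^sub>R x \<xi>' + b *\<^sub>R y \<xi>') $ k"
    by simp
qed

lemma Msp_lincomb:
  "x \<in> Msp Xi p stg \<Longrightarrow> y \<in> Msp Xi p stg \<Longrightarrow> (\<lambda>\<xi>. a *\<^sub>R x \<xi> + b *\<^sub>R y \<xi>) \<in> Msp Xi p stg"
  unfolding Msp_def by (simp add: Lsp_lincomb ip_add_right ip_scaleR_right)

lemma NAsp_zero: "(\<lambda>_. 0) \<in> NAsp Xi stg"
  unfolding NAsp_def Lsp_def by auto

lemma Msp_zero: "(\<lambda>_. 0) \<in> Msp Xi p stg"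
  unfolding Msp_def Lsp_def by (simp add: ip_zero_right)

lemma NAsp_diff: "u \<in> NAsp Xi stg \<Longrightarrow> v \<in> NAsp Xi stg \<Longrightarrow> (\<lambda>\<xi>. u \<xi> - v \<xi>) \<in> NAsp Xi stg"
  using NAsp_lincomb[of u Xi stg v 1 "-1"] by simp

lemma NAsp_scaleR: "x \<in> NAsp Xi stg \<Longrightarrow> (\<lambda>\<xi>. c *\<^sub>R x \<xi>) \<in> NAsp Xi stg"
  using NAsp_lincomb[of x Xi stg x c 0] by simp

lemma Msp_diff: "u \<in> Msp Xi p stg \<Longrightarrow> v \<in> Msp Xi p stg \<Longrightarrow> (\<lambda>\<xi>. u \<xi> - v \<xi>) \<in> Msp Xi p stg"
  using Msp_lincomb[of u Xi p stg v 1 "-1"] by simp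

lemma Msp_scaleR: "x \<in> Msp Xi p stg \<Longrightarrow> (\<lambda>\<xi>. c *\<^sub>R x \<xi>) \<in> Msp Xi p stg"
  using Msp_lincomb[of x Xi p stg x c 0] by simp

lemma NAsp_subset_Lsp: "NAsp Xi stg \<subseteq> Lsp Xi"
  unfolding NAsp_def by auto

lemma Msp_subset_Lsp: "Msp Xi p stg \<subseteq> Lsp Xi"
  unfolding Msp_def by auto

lemma ip_NAsp_Msp: "x \<in> NAsp Xi stg \<Longrightarrow> y \<in> Msp Xi p stg \<Longrightarrow> ip Xi p x y = 0"
  unfolding Msp_def by auto

lemma ip_NAsp_Msp_sum:
  assumes "n1 \<in> NAsp Xi stg" "n2 \<in> NAsp Xi stg" "m1 \<in> Msp Xi p stg" "m2 \<in> Msp Xi p stg"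
  shows "ip Xi p (\<lambda>\<xi>. n1 \<xi> + m1 \<xi>) (\<lambda>\<xi>. n2 \<xi> + m2 \<xi>) = ip Xi p n1 n2 + ip Xi p m1 m2"
proof -
  have "ip Xi p n1 m2 = 0" "ip Xi p m1 n2 = 0"
    using assms ip_NAsp_Msp ip_commute[of Xi p m1 n2] by auto
  then show ?thesis by (simp add: ip_add_left ip_add_right)
qed

locale scenario_space =
  fixes Xi :: "(nat \<Rightarrow> 'e) set" and p :: "(nat \<Rightarrow> 'e) \<Rightarrow> real"
  assumes finite_Xi: "finite Xi" and p_pos: "\<forall>\<xi>\<in>Xi. p \<xi> > 0"
begin

lemma ip_self_nonneg: "ip Xi p x x \<ge> 0"
  unfolding ip_def using p_pos by (intro sum_nonneg) auto

lemma Lnorm_power2: "(Lnorm Xi p x)\<^sup>2 = ip Xi p x x"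
  unfolding Lnorm_def using ip_self_nonneg by simp

lemma Lnorm_scaleR: "Lnorm Xi p (\<lambda>\<xi>. c *\<^sub>R u \<xi>) = \<bar>c\<bar> * Lnorm Xi p u"
proof -
  have "Lnorm Xi p (\<lambda>\<xi>. c *\<^sub>R u \<xi>) = sqrt (c\<^sup>2 * ip Xi p u u)"
    unfolding Lnorm_def by (simp add: ip_scaleR_left ip_scaleR_right power2_eq_square)
  then show ?thesis unfolding Lnorm_def by (simp add: real_sqrt_mult)
qed

lemma ip_self_eq_0_iff:
  assumes "x \<in> Lsp Xi"
  shows "ip Xi p x x = 0 \<longleftrightarrow> x = (\<lambda>_. 0)"
proof
  assume "ip Xi p x x = 0"
  then have "\<forall>\<xi>\<in>Xi. p \<xi> * (x \<xi> \<bullet> x \<xi>) = 0"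
    unfolding ip_def using finite_Xi p_pos by (subst (asm) sum_nonneg_eq_0_iff) auto
  then show "x = (\<lambda>_. 0)"
    using p_pos assms unfolding Lsp_def by fastforce
qed (simp add: ip_zero_left)

lemma ip_self_add_le:
  "ip Xi p (\<lambda>\<xi>. u \<xi> + v \<xi>) (\<lambda>\<xi>. u \<xi> + v \<xi>) \<le> 2 * ip Xi p u u + 2 * ip Xi p v v"
  using ip_self_nonneg[of "\<lambda>\<xi>. u \<xi> - v \<xi>"]
  by (simp add: ip_bilinear ip_commute[of Xi p v u])

lemma oproj_eqI:
  assumes S: "S \<subseteq> Lsp Xi" "\<And>u v. u \<in> S \<Longrightarrow> v \<in> S \<Longrightarrow> (\<lambda>\<xi>. u \<xi> - v \<xi>) \<in> S"
    and y: "y \<in> S" "\<forall>z\<in>S. ip Xi p (\<lambda>\<xi>. x \<xi> - y \<xi>) z = 0"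
  shows "oproj Xi p S x = y"
  unfolding oproj_def
proof (rule the_equality)
  fix y' assume y': "y' \<in> S \<and> (\<forall>z\<in>S. ip Xi p (\<lambda>\<xi>. x \<xi> - y' \<xi>) z = 0)"
  define d where "d = (\<lambda>\<xi>. y' \<xi> - y \<xi>)"
  have "d \<in> S" unfolding d_def using S y y' by auto
  have "ip Xi p d d = ip Xi p (\<lambda>\<xi>. x \<xi> - y \<xi>) d - ip Xi p (\<lambda>\<xi>. x \<xi> - y' \<xi>) d"
    unfolding d_def by (simp add: ip_bilinear)
  also have "\<dots> = 0" using y y' \<open>d \<in> S\<close> by auto
  finally have "d = (\<lambda>_. 0)" using ip_self_eq_0_iff[of d] \<open>d \<in> S\<close> S(1) by auto
  then show "y' = y" unfolding d_def by (auto simp: fun_eq_iff)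
qed (use y in auto)

end

section \<open>Nonanticipative projections as conditional expectations\<close>

definition same_history :: "('n \<Rightarrow> nat) \<Rightarrow> 'n \<Rightarrow> (nat \<Rightarrow> 'e) \<Rightarrow> (nat \<Rightarrow> 'e) \<Rightarrow> bool" where
  "same_history stg k \<xi> \<xi>' \<longleftrightarrow> (\<forall>i. 1 \<le> i \<and> i < stg k \<longrightarrow> \<xi> i = \<xi>' i)"

definition history_prob ::
    "(nat \<Rightarrow> 'e) set \<Rightarrow> ((nat \<Rightarrow> 'e) \<Rightarrow> real) \<Rightarrow> ('n \<Rightarrow> nat) \<Rightarrow> 'n \<Rightarrow> (nat \<Rightarrow> 'e) \<Rightarrow> real" where
  "history_prob Xi p stg k \<xi> = (\<Sum>\<xi>'\<in>Xi. if same_history stg k \<xi> \<xi>' then p \<xi>' else 0)"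

definition history_sum :: "(nat \<Rightarrow> 'e) set \<Rightarrow> ((nat \<Rightarrow> 'e) \<Rightarrow> real) \<Rightarrow> ('n::finite \<Rightarrow> nat) \<Rightarrow> 'n
    \<Rightarrow> ('e, 'n) Lfun \<Rightarrow> (nat \<Rightarrow> 'e) \<Rightarrow> real" where
  "history_sum Xi p stg k x \<xi> = (\<Sum>\<xi>'\<in>Xi. if same_history stg k \<xi> \<xi>' then p \<xi>' * x \<xi>' $ k else 0)"

definition cond_exp :: "(nat \<Rightarrow> 'e) set \<Rightarrow> ((nat \<Rightarrow> 'e) \<Rightarrow> real) \<Rightarrow> ('n \<Rightarrow> nat)
    \<Rightarrow> ('e, 'n::finite) Lfun \<Rightarrow> ('e, 'n) Lfun" where
  "cond_exp Xi p stg x =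
     (\<lambda>\<xi>. if \<xi> \<in> Xi then (\<chi> k. history_sum Xi p stg k x \<xi> / history_prob Xi p stg k \<xi>) else 0)"

lemma same_history_refl: "same_history stg k \<xi> \<xi>"
  unfolding same_history_def by auto

lemma same_history_sym: "same_history stg k \<xi> \<xi>' \<Longrightarrow> same_history stg k \<xi>' \<xi>"
  unfolding same_history_def by auto

lemma same_history_trans:
  "same_history stg k \<xi> \<xi>' \<Longrightarrow> same_history stg k \<xi>' \<xi>'' \<Longrightarrow> same_history stg k \<xi> \<xi>''"
  unfolding same_history_def by auto

lemma history_prob_cong: "same_history stg k \<xi> \<xi>' \<Longrightarrow> history_prob Xi p stg k \<xi> = history_prob Xi p stg k \<xi>'"
  unfolding history_prob_def by (intro sum.cong) (auto dest: same_history_sym same_history_trans)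

lemma history_sum_cong:
  "same_history stg k \<xi> \<xi>' \<Longrightarrow> history_sum Xi p stg k x \<xi> = history_sum Xi p stg k x \<xi>'"
  unfolding history_sum_def by (intro sum.cong) (auto dest: same_history_sym same_history_trans)

lemma NAsp_same_history:
  "x \<in> NAsp Xi stg \<Longrightarrow> \<xi> \<in> Xi \<Longrightarrow> \<xi>' \<in> Xi \<Longrightarrow> same_history stg k \<xi> \<xi>' \<Longrightarrow> x \<xi> $ k = x \<xi>' $ k"
  unfolding NAsp_def same_history_def by blast

lemma cond_exp_in_NAsp: "cond_exp Xi p stg x \<in> NAsp Xi stg"
proof -
  have "history_sum Xi p stg k x \<xi> / history_prob Xi p stg k \<xi>
      = history_sum Xi p stg k x \<xi>' / history_prob Xi p stg k \<xi>'"
    if "\<forall>i. 1 \<le> i \<and> i < stg k \<longrightarrow> \<xi> i = \<xi>' i" for k \<xi> \<xi>'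
  proof -
    have "same_history stg k \<xi> \<xi>'" using that unfolding same_history_def .
    then show ?thesis by (simp only: history_prob_cong history_sum_cong)
  qed
  then show ?thesis
    unfolding NAsp_def Lsp_def cond_exp_def by auto
qed

context scenario_space
begin

lemma history_prob_pos: "\<xi> \<in> Xi \<Longrightarrow> history_prob Xi p stg k \<xi> > 0"
proof -
  assume "\<xi> \<in> Xi"
  then have "p \<xi> \<le> history_prob Xi p stg k \<xi>"
    using member_le_sum[of \<xi> Xi "\<lambda>\<xi>'. if same_history stg k \<xi> \<xi>' then p \<xi>' else 0"]
      finite_Xi p_pos by (auto simp: history_prob_def same_history_refl less_imp_le)
  with \<open>\<xi> \<in> Xi\<close> p_pos show ?thesis by fastforce
qed

lemma cond_exp_component_orth:
  assumes z: "z \<in> NAsp Xi stg"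
  shows "(\<Sum>\<xi>\<in>Xi. p \<xi> * (history_sum Xi p stg k x \<xi> / history_prob Xi p stg k \<xi>) * z \<xi> $ k)
       = (\<Sum>\<xi>\<in>Xi. p \<xi> * x \<xi> $ k * z \<xi> $ k)"
proof -
  let ?W = "history_prob Xi p stg k" and ?h = "same_history stg k"
  let ?f = "\<lambda>\<xi> \<xi>'. if ?h \<xi> \<xi>' then p \<xi> * p \<xi>' * x \<xi>' $ k * z \<xi>' $ k / ?W \<xi>' else 0"
  have "p \<xi> * (history_sum Xi p stg k x \<xi> / ?W \<xi>) * z \<xi> $ k = (\<Sum>\<xi>'\<in>Xi. ?f \<xi> \<xi>')"
    if "\<xi> \<in> Xi" for \<xi>
    unfolding history_sum_def sum_divide_distrib sum_distrib_left sum_distrib_right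
    using that NAsp_same_history[OF z] history_prob_cong[of stg k \<xi>] by (intro sum.cong) auto
  then have "(\<Sum>\<xi>\<in>Xi. p \<xi> * (history_sum Xi p stg k x \<xi> / ?W \<xi>) * z \<xi> $ k)
      = (\<Sum>\<xi>\<in>Xi. \<Sum>\<xi>'\<in>Xi. ?f \<xi> \<xi>')"
    by (rule sum.cong[OF refl])
  also have "\<dots> = (\<Sum>\<xi>'\<in>Xi. \<Sum>\<xi>\<in>Xi. ?f \<xi> \<xi>')"
    by (rule sum.swap)
  also have "\<dots> = (\<Sum>\<xi>'\<in>Xi. ?W \<xi>' * (p \<xi>' * x \<xi>' $ k * z \<xi>' $ k / ?W \<xi>'))"
    unfolding history_prob_def sum_distrib_right
    by (intro sum.cong refl) (auto dest: same_history_sym)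
  also have "\<dots> = (\<Sum>\<xi>\<in>Xi. p \<xi> * x \<xi> $ k * z \<xi> $ k)"
    using history_prob_pos[of _ stg k] by (intro sum.cong) force+
  finally show ?thesis .
qed

lemma cond_exp_orth:
  assumes z: "z \<in> NAsp Xi stg"
  shows "ip Xi p (\<lambda>\<xi>. x \<xi> - cond_exp Xi p stg x \<xi>) z = 0"
proof -
  have "ip Xi p (\<lambda>\<xi>. x \<xi> - cond_exp Xi p stg x \<xi>) z
     = (\<Sum>\<xi>\<in>Xi. \<Sum>k\<in>UNIV. p \<xi> * x \<xi> $ k * z \<xi> $ k
          - p \<xi> * (history_sum Xi p stg k x \<xi> / history_prob Xi p stg k \<xi>) * z \<xi> $ k)"
    unfolding ip_def
    by (intro sum.cong refl) (simp add: inner_vec_def sum_distrib_left cond_exp_def algebra_simps)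
  also have "\<dots> = (\<Sum>k\<in>UNIV. (\<Sum>\<xi>\<in>Xi. p \<xi> * x \<xi> $ k * z \<xi> $ k)
          - (\<Sum>\<xi>\<in>Xi. p \<xi> * (history_sum Xi p stg k x \<xi> / history_prob Xi p stg k \<xi>) * z \<xi> $ k))"
    by (subst sum.swap) (simp add: sum_subtractf)
  also have "\<dots> = 0"
    using cond_exp_component_orth[OF z] by (simp only: diff_self sum.neutral_const)
  finally show ?thesis .
qed

lemma PN_eq_cond_exp: "PN Xi p stg x = cond_exp Xi p stg x"
  unfolding PN_def
  using NAsp_subset_Lsp NAsp_diff cond_exp_in_NAsp cond_exp_orth by (intro oproj_eqI) auto

lemma PN_in_NAsp: "PN Xi p stg x \<in> NAsp Xi stg"
  by (simp add: PN_eq_cond_exp cond_exp_in_NAsp)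

lemma PN_orth: "z \<in> NAsp Xi stg \<Longrightarrow> ip Xi p (\<lambda>\<xi>. x \<xi> - PN Xi p stg x \<xi>) z = 0"
  by (simp add: PN_eq_cond_exp cond_exp_orth)

lemma PM_eq: "PM Xi p stg x = (\<lambda>\<xi>. if \<xi> \<in> Xi then x \<xi> - PN Xi p stg x \<xi> else 0)"
proof -
  let ?y = "\<lambda>\<xi>. if \<xi> \<in> Xi then x \<xi> - PN Xi p stg x \<xi> else 0"
  have "ip Xi p z ?y = ip Xi p (\<lambda>\<xi>. x \<xi> - PN Xi p stg x \<xi>) z" for z
    by (subst ip_commute) (rule ip_cong; simp)
  then have y_M: "?y \<in> Msp Xi p stg"
    using PN_orth unfolding Msp_def Lsp_def by auto
  have orth: "\<forall>z\<in>Msp Xi p stg. ip Xi p (\<lambda>\<xi>. x \<xi> - ?y \<xi>) z = 0"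
  proof
    fix z assume "z \<in> Msp Xi p stg"
    have "ip Xi p (\<lambda>\<xi>. x \<xi> - ?y \<xi>) z = ip Xi p (PN Xi p stg x) z"
      by (rule ip_cong) auto
    then show "ip Xi p (\<lambda>\<xi>. x \<xi> - ?y \<xi>) z = 0"
      using ip_NAsp_Msp[OF PN_in_NAsp \<open>z \<in> Msp Xi p stg\<close>] by simp
  qed
  show ?thesis
    unfolding PM_def by (rule oproj_eqI[OF Msp_subset_Lsp Msp_diff y_M orth])
qed

lemma PM_in_Msp: "PM Xi p stg x \<in> Msp Xi p stg"
proof -
  have "ip Xi p z (PM Xi p stg x) = ip Xi p (\<lambda>\<xi>. x \<xi> - PN Xi p stg x \<xi>) z" for z
    unfolding PM_eq by (subst ip_commute) (rule ip_cong; simp)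
  then show ?thesis
    using PN_orth unfolding Msp_def Lsp_def PM_eq by auto
qed

lemma PN_in_Lsp: "PN Xi p stg x \<in> Lsp Xi"
  using PN_in_NAsp NAsp_subset_Lsp by blast

lemma PM_in_Lsp: "PM Xi p stg x \<in> Lsp Xi"
  using PM_in_Msp Msp_subset_Lsp by blast

lemma PN_outside: "\<xi> \<notin> Xi \<Longrightarrow> PN Xi p stg x \<xi> = 0"
  using PN_in_Lsp unfolding Lsp_def by blast

lemma PM_outside: "\<xi> \<notin> Xi \<Longrightarrow> PM Xi p stg x \<xi> = 0"
  using PM_in_Lsp unfolding Lsp_def by blast

lemma PN_plus_PM: "x \<in> Lsp Xi \<Longrightarrow> PN Xi p stg x \<xi> + PM Xi p stg x \<xi> = x \<xi>"
  unfolding PM_eq using PN_in_Lsp[of stg x] by (auto simp: Lsp_def)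

lemma PN_PM_diff:
  assumes "x \<in> Lsp Xi" and "y \<in> Lsp Xi"
  shows "(\<lambda>\<xi>. (PN Xi p stg x \<xi> - PN Xi p stg y \<xi>) + (PM Xi p stg x \<xi> - PM Xi p stg y \<xi>))
    = (\<lambda>\<xi>. x \<xi> - y \<xi>)"
proof -
  have "(\<lambda>\<xi>. (PN Xi p stg x \<xi> - PN Xi p stg y \<xi>) + (PM Xi p stg x \<xi> - PM Xi p stg y \<xi>))
    = (\<lambda>\<xi>. (PN Xi p stg x \<xi> + PM Xi p stg x \<xi>) - (PN Xi p stg y \<xi> + PM Xi p stg y \<xi>))"
    by (simp add: algebra_simps)
  then show ?thesis by (simp only: PN_plus_PM assms)
qed

lemma PN_add_NAsp_Msp:
  assumes "n \<in> NAsp Xi stg" and "m \<in> Msp Xi p stg"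
  shows "PN Xi p stg (\<lambda>\<xi>. n \<xi> + m \<xi>) = n"
  unfolding PN_def
proof (rule oproj_eqI[OF NAsp_subset_Lsp NAsp_diff assms(1)])
  show "\<forall>z\<in>NAsp Xi stg. ip Xi p (\<lambda>\<xi>. n \<xi> + m \<xi> - n \<xi>) z = 0"
    using ip_NAsp_Msp[OF _ assms(2)] ip_commute[of Xi p m] by simp
qed

lemma PM_add_NAsp_Msp:
  assumes "n \<in> NAsp Xi stg" and "m \<in> Msp Xi p stg"
  shows "PM Xi p stg (\<lambda>\<xi>. n \<xi> + m \<xi>) = m"
  using PN_add_NAsp_Msp[OF assms] assms(2) unfolding PM_eq Msp_def Lsp_def by (auto simp: fun_eq_iff)

lemma Mr_norm_eq_Lnorm:
  assumes "n \<in> NAsp Xi stg" and "m \<in> Msp Xi p stg" and "r \<noteq> 0"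
  shows "Mr_norm Xi p r n m = Lnorm Xi p (\<lambda>\<xi>. n \<xi> - (1/r) *\<^sub>R m \<xi>)"
proof -
  have "(\<lambda>\<xi>. n \<xi> - (1/r) *\<^sub>R m \<xi>) = (\<lambda>\<xi>. n \<xi> + (- 1/r) *\<^sub>R m \<xi>)"
    by simp
  then have "ip Xi p (\<lambda>\<xi>. n \<xi> - (1/r) *\<^sub>R m \<xi>) (\<lambda>\<xi>. n \<xi> - (1/r) *\<^sub>R m \<xi>)
      = ip Xi p n n + ip Xi p (\<lambda>\<xi>. (- 1/r) *\<^sub>R m \<xi>) (\<lambda>\<xi>. (- 1/r) *\<^sub>R m \<xi>)"
    using assms by (simp only: ip_NAsp_Msp_sum Msp_scaleR)
  also have "\<dots> = ip Xi p n n + ip Xi p m m / r\<^sup>2"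
    by (simp only: ip_scaleR_left ip_scaleR_right) (simp add: power2_eq_square)
  finally show ?thesis
    unfolding Mr_norm_def Lnorm_power2 unfolding Lnorm_def by simp
qed

end

section \<open>Normal cones and the operator (ATA)\<inverse>\<close>

lemma ncone_monotone:
  assumes "(f1 - f2) \<bullet> (u1 - u2) \<ge> 0" and "g1 - f1 \<in> ncone C u1" and "g2 - f2 \<in> ncone C u2"
  shows "(g1 - g2) \<bullet> (u1 - u2) \<ge> 0"
proof -
  have "(g1 - f1) \<bullet> (u2 - u1) \<le> 0" "(g2 - f2) \<bullet> (u1 - u2) \<le> 0"
    using assms(2,3) unfolding ncone_def by auto
  moreover have "(g1 - g2) \<bullet> (u1 - u2)
      = (f1 - f2) \<bullet> (u1 - u2) - (g1 - f1) \<bullet> (u2 - u1) - (g2 - f2) \<bullet> (u1 - u2)"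
    by (simp add: inner_diff_left inner_diff_right)
  ultimately show ?thesis using assms(1) by linarith
qed

context scenario_space
begin

lemma LNcone_Ccal_iff:
  assumes "V \<in> Lsp Xi" and "u \<in> Lsp Xi"
  shows "V \<in> LNcone Xi p (Ccal Xi C) u \<longleftrightarrow> (\<forall>\<xi>\<in>Xi. V \<xi> \<in> ncone (C \<xi>) (u \<xi>))"
proof
  assume V: "V \<in> LNcone Xi p (Ccal Xi C) u"
  then have u: "u \<in> Ccal Xi C" unfolding LNcone_def by auto
  show "\<forall>\<xi>\<in>Xi. V \<xi> \<in> ncone (C \<xi>) (u \<xi>)"
  proof
    fix \<xi> assume \<xi>: "\<xi> \<in> Xi"
    have "V \<xi> \<bullet> (c - u \<xi>) \<le> 0" if c: "c \<in> C \<xi>" for c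
    proof -
      have "u(\<xi> := c) \<in> Ccal Xi C" using u c \<xi> unfolding Ccal_def Lsp_def by auto
      then have "ip Xi p V (\<lambda>\<eta>. (u(\<xi> := c)) \<eta> - u \<eta>) \<le> 0" using V unfolding LNcone_def by auto
      also have "ip Xi p V (\<lambda>\<eta>. (u(\<xi> := c)) \<eta> - u \<eta>)
          = (\<Sum>\<eta>\<in>Xi. if \<eta> = \<xi> then p \<xi> * (V \<xi> \<bullet> (c - u \<xi>)) else 0)"
        unfolding ip_def by (intro sum.cong) auto
      also have "\<dots> = p \<xi> * (V \<xi> \<bullet> (c - u \<xi>))"
        using finite_Xi \<xi> by simp
      finally show ?thesis using p_pos \<xi> by (auto simp: mult_le_0_iff)
    qed
    then show "V \<xi> \<in> ncone (C \<xi>) (u \<xi>)" using u \<xi> unfolding ncone_def Ccal_def by auto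
  qed
next
  assume pw: "\<forall>\<xi>\<in>Xi. V \<xi> \<in> ncone (C \<xi>) (u \<xi>)"
  have "ip Xi p V (\<lambda>\<xi>. x \<xi> - u \<xi>) \<le> 0" if "x \<in> Ccal Xi C" for x
    unfolding ip_def
  proof (intro sum_nonpos)
    fix \<xi> assume "\<xi> \<in> Xi"
    then have "V \<xi> \<bullet> (x \<xi> - u \<xi>) \<le> 0" using pw that unfolding ncone_def Ccal_def by auto
    with \<open>\<xi> \<in> Xi\<close> p_pos show "p \<xi> * (V \<xi> \<bullet> (x \<xi> - u \<xi>)) \<le> 0"
      by (simp add: mult_nonneg_nonpos less_imp_le)
  qed
  then show "V \<in> LNcone Xi p (Ccal Xi C) u"
    using assms pw unfolding LNcone_def Ccal_def ncone_def by auto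
qed

lemma Top_iff:
  "z \<in> Top Xi p stg F C y \<longleftrightarrow> z \<in> Lsp Xi \<and>
     (\<forall>\<xi>\<in>Xi. PN Xi p stg z \<xi> + PM Xi p stg y \<xi> - F (PN Xi p stg y \<xi> + PM Xi p stg z \<xi>) \<xi>
        \<in> ncone (C \<xi>) (PN Xi p stg y \<xi> + PM Xi p stg z \<xi>))"
proof -
  define u where "u = (\<lambda>\<xi>. PN Xi p stg y \<xi> + PM Xi p stg z \<xi>)"
  define g where "g = (\<lambda>\<xi>. PN Xi p stg z \<xi> + PM Xi p stg y \<xi>)"
  define V where "V = (\<lambda>\<xi>. if \<xi> \<in> Xi then g \<xi> - F (u \<xi>) \<xi> else 0)"
  have u: "u \<in> Lsp Xi" and g: "g \<in> Lsp Xi" and V: "V \<in> Lsp Xi"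
    unfolding u_def g_def V_def Lsp_def by (auto simp: PN_outside PM_outside)
  have "(\<exists>V'\<in>LNcone Xi p (Ccal Xi C) u. g = (\<lambda>\<xi>. Fcal Xi F u \<xi> + V' \<xi>))
      \<longleftrightarrow> V \<in> LNcone Xi p (Ccal Xi C) u"
  proof
    assume "\<exists>V'\<in>LNcone Xi p (Ccal Xi C) u. g = (\<lambda>\<xi>. Fcal Xi F u \<xi> + V' \<xi>)"
    then obtain V' where V': "V' \<in> LNcone Xi p (Ccal Xi C) u" "g = (\<lambda>\<xi>. Fcal Xi F u \<xi> + V' \<xi>)" ..
    then have "V' = V"
      using g unfolding V_def Fcal_def LNcone_def Lsp_def by (auto simp: fun_eq_iff)
    then show "V \<in> LNcone Xi p (Ccal Xi C) u" using V' by simp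
  next
    assume "V \<in> LNcone Xi p (Ccal Xi C) u"
    moreover have "g = (\<lambda>\<xi>. Fcal Xi F u \<xi> + V \<xi>)"
      using g unfolding V_def Fcal_def Lsp_def by (auto simp: fun_eq_iff)
    ultimately show "\<exists>V'\<in>LNcone Xi p (Ccal Xi C) u. g = (\<lambda>\<xi>. Fcal Xi F u \<xi> + V' \<xi>)" by blast
  qed
  also have "\<dots> \<longleftrightarrow> (\<forall>\<xi>\<in>Xi. g \<xi> - F (u \<xi>) \<xi> \<in> ncone (C \<xi>) (u \<xi>))"
    unfolding LNcone_Ccal_iff[OF V u] by (simp add: V_def)
  finally show ?thesis
    unfolding Top_def Let_def u_def g_def by simp
qed

lemma PN_Aop: "PN Xi p stg (Aop Xi p stg r z) = PN Xi p stg z"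
  unfolding Aop_def by (rule PN_add_NAsp_Msp[OF PN_in_NAsp Msp_scaleR[OF PM_in_Msp]])

lemma PM_Aop: "PM Xi p stg (Aop Xi p stg r z) = (\<lambda>\<xi>. r *\<^sub>R PM Xi p stg z \<xi>)"
  unfolding Aop_def by (rule PM_add_NAsp_Msp[OF PN_in_NAsp Msp_scaleR[OF PM_in_Msp]])

lemma Aop_eq_iff:
  assumes "r \<noteq> 0" and "y \<in> Lsp Xi" and "v \<in> Lsp Xi"
  shows "v = Aop Xi p stg r y \<longleftrightarrow> y = (\<lambda>\<xi>. PN Xi p stg v \<xi> + (1/r) *\<^sub>R PM Xi p stg v \<xi>)"
proof
  assume "v = Aop Xi p stg r y"
  then have "PN Xi p stg v = PN Xi p stg y" "PM Xi p stg v = (\<lambda>\<xi>. r *\<^sub>R PM Xi p stg y \<xi>)"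
    by (simp_all add: PN_Aop PM_Aop)
  then show "y = (\<lambda>\<xi>. PN Xi p stg v \<xi> + (1/r) *\<^sub>R PM Xi p stg v \<xi>)"
    using assms(1) PN_plus_PM[OF assms(2)] by (simp add: fun_eq_iff)
next
  assume y: "y = (\<lambda>\<xi>. PN Xi p stg v \<xi> + (1/r) *\<^sub>R PM Xi p stg v \<xi>)"
  then have "PN Xi p stg y = PN Xi p stg v" "PM Xi p stg y = (\<lambda>\<xi>. (1/r) *\<^sub>R PM Xi p stg v \<xi>)"
    by (simp_all add: PN_add_NAsp_Msp PM_add_NAsp_Msp PN_in_NAsp Msp_scaleR PM_in_Msp)
  then show "v = Aop Xi p stg r y"
    unfolding Aop_def using assms(1) PN_plus_PM[OF assms(3)] by (simp add: fun_eq_iff)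
qed

lemma ATAinv_iff:
  assumes "r \<noteq> 0" and "v \<in> Lsp Xi"
  shows "z \<in> ATAinv Xi p stg r F C v \<longleftrightarrow> z \<in> Lsp Xi \<and>
    (\<forall>\<xi>\<in>Xi. let u = PN Xi p stg z \<xi> + (1/r) *\<^sub>R PM Xi p stg v \<xi> in
       PN Xi p stg v \<xi> + r *\<^sub>R PM Xi p stg z \<xi> - F u \<xi> \<in> ncone (C \<xi>) u)"
proof -
  define y where "y = (\<lambda>\<xi>. PN Xi p stg v \<xi> + (1/r) *\<^sub>R PM Xi p stg v \<xi>)"
  have "PN Xi p stg y = PN Xi p stg v" "PM Xi p stg y = (\<lambda>\<xi>. (1/r) *\<^sub>R PM Xi p stg v \<xi>)"
    unfolding y_def by (simp_all add: PN_add_NAsp_Msp PM_add_NAsp_Msp PN_in_NAsp Msp_scaleR PM_in_Msp)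
  moreover have "y \<in> Lsp Xi"
    unfolding y_def Lsp_def by (simp add: PN_outside PM_outside)
  moreover have "(\<exists>y'\<in>Top Xi p stg F C (Aop Xi p stg r z). v = Aop Xi p stg r y')
      \<longleftrightarrow> y \<in> Top Xi p stg F C (Aop Xi p stg r z)"
  proof
    assume "\<exists>y'\<in>Top Xi p stg F C (Aop Xi p stg r z). v = Aop Xi p stg r y'"
    then obtain y' where y': "y' \<in> Top Xi p stg F C (Aop Xi p stg r z)" "v = Aop Xi p stg r y'" ..
    then have "y' \<in> Lsp Xi" by (simp add: Top_def)
    then have "y' = y"
      using Aop_eq_iff[OF assms(1) _ assms(2)] y'(2) unfolding y_def by blast
    with y'(1) show "y \<in> Top Xi p stg F C (Aop Xi p stg r z)" by simp
  next
    assume y: "y \<in> Top Xi p stg F C (Aop Xi p stg r z)"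
    then have "y \<in> Lsp Xi" by (simp add: Top_def)
    then have "v = Aop Xi p stg r y"
      using Aop_eq_iff[OF assms(1) _ assms(2)] unfolding y_def by blast
    with y show "\<exists>y'\<in>Top Xi p stg F C (Aop Xi p stg r z). v = Aop Xi p stg r y'" by blast
  qed
  ultimately show ?thesis
    unfolding ATAinv_def Top_iff PN_Aop PM_Aop Let_def using assms(1)
    by (auto simp: algebra_simps)
qed

lemma PN_zero: "PN Xi p stg (\<lambda>_. 0) = (\<lambda>_. 0)"
  using PN_add_NAsp_Msp[OF NAsp_zero Msp_zero] by simp

lemma PM_zero: "PM Xi p stg (\<lambda>_. 0) = (\<lambda>_. 0)"
  using PM_add_NAsp_Msp[OF NAsp_zero Msp_zero] by simp

lemma svi_solution_of_ATAinv_zero: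
  assumes "r \<noteq> 0" and "z \<in> ATAinv Xi p stg r F C (\<lambda>_. 0)"
  shows "svi_solution Xi p stg F C (PN Xi p stg z) (\<lambda>\<xi>. (- r) *\<^sub>R PM Xi p stg z \<xi>)"
proof -
  have "\<forall>\<xi>\<in>Xi. r *\<^sub>R PM Xi p stg z \<xi> - F (PN Xi p stg z \<xi>) \<xi> \<in> ncone (C \<xi>) (PN Xi p stg z \<xi>)"
  proof -
    have "(\<lambda>_. 0) \<in> Lsp Xi" by (simp add: Lsp_def)
    from ATAinv_iff[OF assms(1) this, of z stg F C] assms(2) show ?thesis
      unfolding PN_zero PM_zero Let_def by simp
  qed
  then show ?thesis
    unfolding svi_solution_def using PN_in_NAsp[of stg z] Msp_scaleR[OF PM_in_Msp, of "- r" stg z]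
    by simp
qed

lemma ATAinv_monotone:
  assumes F_mono: "\<forall>\<xi>\<in>Xi. \<forall>u v. (F u \<xi> - F v \<xi>) \<bullet> (u - v) \<ge> 0" and r: "r \<noteq> 0"
    and v: "v1 \<in> Lsp Xi" "v2 \<in> Lsp Xi"
    and z: "z1 \<in> ATAinv Xi p stg r F C v1" "z2 \<in> ATAinv Xi p stg r F C v2"
  shows "ip Xi p (\<lambda>\<xi>. v1 \<xi> - v2 \<xi>) (\<lambda>\<xi>. z1 \<xi> - z2 \<xi>) \<ge> 0"
proof -
  define nv where "nv = (\<lambda>\<xi>. PN Xi p stg v1 \<xi> - PN Xi p stg v2 \<xi>)"
  define mv where "mv = (\<lambda>\<xi>. PM Xi p stg v1 \<xi> - PM Xi p stg v2 \<xi>)"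
  define nz where "nz = (\<lambda>\<xi>. PN Xi p stg z1 \<xi> - PN Xi p stg z2 \<xi>)"
  define mz where "mz = (\<lambda>\<xi>. PM Xi p stg z1 \<xi> - PM Xi p stg z2 \<xi>)"
  have N: "nv \<in> NAsp Xi stg" "nz \<in> NAsp Xi stg"
    unfolding nv_def nz_def by (simp_all add: NAsp_diff PN_in_NAsp)
  have M: "mv \<in> Msp Xi p stg" "mz \<in> Msp Xi p stg"
    unfolding mv_def mz_def by (simp_all add: Msp_diff PM_in_Msp)
  have zL: "z1 \<in> Lsp Xi" "z2 \<in> Lsp Xi" using z by (simp_all add: ATAinv_def)
  define u where "u = (\<lambda>z v \<xi>. PN Xi p stg z \<xi> + (1/r) *\<^sub>R PM Xi p stg v \<xi>)"
  define g where "g = (\<lambda>z v \<xi>. PN Xi p stg v \<xi> + r *\<^sub>R PM Xi p stg z \<xi>)"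
  have "\<forall>\<xi>\<in>Xi. g z1 v1 \<xi> - F (u z1 v1 \<xi>) \<xi> \<in> ncone (C \<xi>) (u z1 v1 \<xi>)"
    "\<forall>\<xi>\<in>Xi. g z2 v2 \<xi> - F (u z2 v2 \<xi>) \<xi> \<in> ncone (C \<xi>) (u z2 v2 \<xi>)"
    using z ATAinv_iff[OF r v(1)] ATAinv_iff[OF r v(2)] unfolding u_def g_def Let_def by auto
  then have "\<forall>\<xi>\<in>Xi. (g z1 v1 \<xi> - g z2 v2 \<xi>) \<bullet> (u z1 v1 \<xi> - u z2 v2 \<xi>) \<ge> 0"
    using F_mono ncone_monotone by blast
  then have "ip Xi p (\<lambda>\<xi>. g z1 v1 \<xi> - g z2 v2 \<xi>) (\<lambda>\<xi>. u z1 v1 \<xi> - u z2 v2 \<xi>) \<ge> 0"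
    unfolding ip_def using p_pos by (intro sum_nonneg) (simp add: less_imp_le)
  also have "ip Xi p (\<lambda>\<xi>. g z1 v1 \<xi> - g z2 v2 \<xi>) (\<lambda>\<xi>. u z1 v1 \<xi> - u z2 v2 \<xi>)
      = ip Xi p (\<lambda>\<xi>. nv \<xi> + r *\<^sub>R mz \<xi>) (\<lambda>\<xi>. nz \<xi> + (1/r) *\<^sub>R mv \<xi>)"
    unfolding g_def u_def nv_def mv_def nz_def mz_def by (simp add: algebra_simps)
  also have "\<dots> = ip Xi p nv nz + ip Xi p (\<lambda>\<xi>. r *\<^sub>R mz \<xi>) (\<lambda>\<xi>. (1/r) *\<^sub>R mv \<xi>)"
    by (rule ip_NAsp_Msp_sum[OF N Msp_scaleR[OF M(2)] Msp_scaleR[OF M(1)]])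
  also have "\<dots> = ip Xi p nv nz + ip Xi p mv mz"
    using r by (simp add: ip_scaleR_left ip_scaleR_right ip_commute[of Xi p mz mv])
  also have "\<dots> = ip Xi p (\<lambda>\<xi>. nv \<xi> + mv \<xi>) (\<lambda>\<xi>. nz \<xi> + mz \<xi>)"
    by (rule ip_NAsp_Msp_sum[OF N M, symmetric])
  also have "\<dots> = ip Xi p (\<lambda>\<xi>. v1 \<xi> - v2 \<xi>) (\<lambda>\<xi>. z1 \<xi> - z2 \<xi>)"
    unfolding nv_def mv_def nz_def mz_def
    by (simp only: PN_PM_diff v zL)
  finally show ?thesis .
qed

end

section \<open>Linear convergence from descent and an error bound\<close>

lemma summable_of_descent:
  fixes E e :: "nat \<Rightarrow> real"
  assumes E_nonneg: "\<And>k. E k \<ge> 0" and e_nonneg: "\<And>k. e k \<ge> 0" and "\<kappa> > 0"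
    and descent: "\<And>k. E (Suc k) \<le> E k - \<kappa> * e k"
  shows "summable e"
proof (rule summableI_nonneg_bounded[OF e_nonneg])
  fix n
  have "\<kappa> * (\<Sum>i<n. e i) \<le> E 0 - E n"
  proof (induction n)
    case (Suc n)
    then show ?case using descent[of n] by (simp add: distrib_left)
  qed simp
  then show "(\<Sum>i<n. e i) \<le> E 0 / \<kappa>"
    using E_nonneg[of n] \<open>\<kappa> > 0\<close> by (simp add: field_simps)
qed

lemma linear_convergence_of_descent_and_error_bound:
  fixes E e :: "nat \<Rightarrow> real"
  assumes E_nonneg: "\<And>k. E k \<ge> 0" and e_nonneg: "\<And>k. e k \<ge> 0" and "\<kappa> > 0"
    and descent: "\<And>k. E (Suc k) \<le> E k - \<kappa> * e k"
    and "\<delta> > 0" and "K > 0" and error_bound: "\<And>k. e k \<le> \<delta> \<Longrightarrow> E k \<le> K * e k"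
  shows "(\<lambda>k. sqrt (E k)) \<longlonglongrightarrow> 0"
    and "\<exists>q. 0 \<le> q \<and> q < 1 \<and> (\<exists>k0. \<forall>k\<ge>k0. sqrt (E (Suc k)) \<le> q * sqrt (E k))"
proof -
  have "summable e"
    using E_nonneg e_nonneg \<open>\<kappa> > 0\<close> descent by (rule summable_of_descent)
  then have "e \<longlonglongrightarrow> 0"
    by (rule summable_LIMSEQ_zero)
  then obtain k0 where k0: "\<And>k. k \<ge> k0 \<Longrightarrow> e k \<le> \<delta>"
    using order_tendstoD(2)[of e 0 sequentially \<delta>] \<open>\<delta> > 0\<close>
    unfolding eventually_sequentially by (auto intro: less_imp_le)
  show "(\<lambda>k. sqrt (E k)) \<longlonglongrightarrow> 0"
  proof (rule tendsto_sandwich[of "\<lambda>_. 0" _ _ "\<lambda>k. sqrt (K * e k)"])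
    show "\<forall>\<^sub>F k in sequentially. sqrt (E k) \<le> sqrt (K * e k)"
      unfolding eventually_sequentially using k0 error_bound by auto
    have "(\<lambda>k. sqrt (K * e k)) \<longlonglongrightarrow> sqrt (K * 0)"
      by (intro tendsto_intros \<open>e \<longlonglongrightarrow> 0\<close>)
    then show "(\<lambda>k. sqrt (K * e k)) \<longlonglongrightarrow> 0" by simp
  qed (use E_nonneg in auto)
  define q where "q = sqrt (max 0 (1 - \<kappa> / K))"
  have "sqrt (E (Suc k)) \<le> q * sqrt (E k)" if "k \<ge> k0" for k
  proof -
    have "(\<kappa> / K) * E k \<le> \<kappa> * e k"
      using error_bound[OF k0[OF that]] \<open>\<kappa> > 0\<close> \<open>K > 0\<close> by (simp add: field_simps)
    then have "E (Suc k) \<le> (1 - \<kappa> / K) * E k"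
      using descent[of k] by (simp add: algebra_simps)
    also have "\<dots> \<le> max 0 (1 - \<kappa> / K) * E k"
      using E_nonneg[of k] by (intro mult_right_mono) auto
    finally show ?thesis unfolding q_def by (simp add: real_sqrt_mult[symmetric])
  qed
  moreover have "0 \<le> q" and "q < 1"
    unfolding q_def using \<open>\<kappa> > 0\<close> \<open>K > 0\<close> by (auto simp: real_sqrt_less_iff max_def)
  ultimately show "\<exists>q. 0 \<le> q \<and> q < 1 \<and> (\<exists>k0. \<forall>k\<ge>k0. sqrt (E (Suc k)) \<le> q * sqrt (E k))"
    by blast
qed

section \<open>The IPHA iteration\<close>

(* With A = |a|^2, B = |b|^2, c = <a, b> and G = <a, z - b - zs>, the left-hand side is the
   decrease of |z - zs|^2 under the IPHA step length tau c / A. *)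
lemma relaxed_step_gain:
  fixes A B c c0 G \<tau> \<theta> :: real
  assumes "A > 0" and "B \<ge> 0" and "c0 > 0" and c: "c \<ge> c0 * (A + B)" and "G \<ge> 0"
    and \<tau>: "\<bar>\<tau> - 1\<bar> \<le> \<theta>" and "\<theta> < 1"
  shows "2 * (\<tau> * (c / A)) * (G + c) - (\<tau> * (c / A))\<^sup>2 * A \<ge> (1 - \<theta>\<^sup>2) * c0\<^sup>2 * (A + B)"
proof -
  have "\<tau> > 0" using assms by (auto simp: abs_le_iff)
  have "c \<ge> 0" using c mult_nonneg_nonneg[of c0 "A + B"] assms by linarith
  have "1 - \<theta>\<^sup>2 \<le> 2 * \<tau> - \<tau>\<^sup>2"
    using power_mono[OF \<tau> abs_ge_zero, of 2] by (simp add: power2_eq_square algebra_simps)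
  moreover have "c0\<^sup>2 * (A + B) \<le> c\<^sup>2 / A"
  proof -
    have "c0\<^sup>2 * (A + B) * A \<le> (c0 * (A + B))\<^sup>2"
      using assms by (simp add: power2_eq_square mult_left_mono)
    also have "\<dots> \<le> c\<^sup>2"
      using c assms by (intro power_mono) auto
    finally show ?thesis using \<open>A > 0\<close> by (simp add: pos_le_divide_eq)
  qed
  moreover have "1 - \<theta>\<^sup>2 \<ge> 0"
    using assms by (simp add: abs_square_le_1)
  ultimately have "(1 - \<theta>\<^sup>2) * (c0\<^sup>2 * (A + B)) \<le> (2 * \<tau> - \<tau>\<^sup>2) * (c\<^sup>2 / A)"
    using assms by (intro mult_mono) auto
  also have "\<dots> = 2 * (\<tau> * (c / A)) * c - (\<tau> * (c / A))\<^sup>2 * A"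
    using \<open>A > 0\<close> by (simp add: field_simps power2_eq_square)
  also have "\<dots> \<le> 2 * (\<tau> * (c / A)) * (G + c) - (\<tau> * (c / A))\<^sup>2 * A"
    using \<open>\<tau> > 0\<close> \<open>c \<ge> 0\<close> \<open>A > 0\<close> \<open>G \<ge> 0\<close> by (intro diff_right_mono mult_left_mono) auto
  finally show ?thesis by (simp add: mult.assoc)
qed

locale ipha = scenario_space Xi p for Xi :: "(nat \<Rightarrow> 'e) set" and p +
  fixes stg :: "'n::finite \<Rightarrow> nat" and r :: real
    and F :: "real^'n \<Rightarrow> (nat \<Rightarrow> 'e) \<Rightarrow> real^'n" and C :: "(nat \<Rightarrow> 'e) \<Rightarrow> (real^'n) set"
    and sbar \<theta> :: real and \<sigma> \<tau> :: "nat \<Rightarrow> real"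
    and x w xh wh :: "nat \<Rightarrow> ('e, 'n) Lfun"
  assumes r_pos: "r > 0"
    and F_mono: "\<forall>\<xi>\<in>Xi. \<forall>u v. (F u \<xi> - F v \<xi>) \<bullet> (u - v) \<ge> 0"
    and run: "ipha_run Xi p stg r F C sbar \<theta> \<sigma> \<tau> x w xh wh"
begin

abbreviation "a k \<equiv> \<lambda>\<xi>. x k \<xi> - PN Xi p stg (xh k) \<xi> + PM Xi p stg (wh k) \<xi>"
abbreviation "b k \<equiv> \<lambda>\<xi>. x k \<xi> - PN Xi p stg (wh k) \<xi> + PM Xi p stg (xh k) \<xi>"
abbreviation "\<alpha> k \<equiv> ip Xi p (a k) (b k) / (Lnorm Xi p (a k))\<^sup>2"
abbreviation "z k \<equiv> \<lambda>\<xi>. x k \<xi> - (1/r) *\<^sub>R w k \<xi>"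

lemma ipha_parameters: "0 < sbar" "sbar < 1" "0 < \<theta>" "\<theta> < 1"
  using run unfolding ipha_run_def by auto

lemma ipha_step:
  "0 \<le> \<sigma> k \<and> \<sigma> k < sbar \<and> xh k \<in> Lsp Xi \<and> wh k \<in> Lsp Xi \<and>
   (\<forall>\<xi>\<in>Xi. \<exists>v \<in> ncone (C \<xi>) (wh k \<xi>). r *\<^sub>R (x k \<xi> - xh k \<xi>) - w k \<xi> = F (wh k \<xi>) \<xi> + v) \<and>
   (Lnorm Xi p (\<lambda>\<xi>. wh k \<xi> - xh k \<xi>))\<^sup>2 \<le> (\<sigma> k)\<^sup>2 * ((Lnorm Xi p (a k))\<^sup>2 + (Lnorm Xi p (b k))\<^sup>2) \<and>
   b k \<noteq> (\<lambda>_. 0) \<and> 1 - \<theta> \<le> \<tau> k \<and> \<tau> k \<le> 1 + \<theta> \<and>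
   x (Suc k) = (\<lambda>\<xi>. x k \<xi> - (\<tau> k * \<alpha> k) *\<^sub>R (x k \<xi> - PN Xi p stg (xh k) \<xi>)) \<and>
   w (Suc k) = (\<lambda>\<xi>. w k \<xi> + (\<tau> k * \<alpha> k * r) *\<^sub>R PM Xi p stg (wh k) \<xi>)"
  using run unfolding ipha_run_def Let_def by blast

lemma sigma_bounds: "0 \<le> \<sigma> k" "\<sigma> k < sbar"
  using ipha_step by blast+

lemma tau_bounds: "1 - \<theta> \<le> \<tau> k" "\<tau> k \<le> 1 + \<theta>"
  using ipha_step by blast+

lemma xh_in_Lsp: "xh k \<in> Lsp Xi" and wh_in_Lsp: "wh k \<in> Lsp Xi"
  using ipha_step by blast+

lemma wh_ncone:
  "\<xi> \<in> Xi \<Longrightarrow> r *\<^sub>R (x k \<xi> - xh k \<xi>) - w k \<xi> - F (wh k \<xi>) \<xi> \<in> ncone (C \<xi>) (wh k \<xi>)"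
  using ipha_step[of k] by (metis add_diff_cancel_left')

lemma inexactness: "(Lnorm Xi p (\<lambda>\<xi>. wh k \<xi> - xh k \<xi>))\<^sup>2 \<le> (\<sigma> k)\<^sup>2 * ((Lnorm Xi p (a k))\<^sup>2 + (Lnorm Xi p (b k))\<^sup>2)"
  using ipha_step by blast

lemma b_nonzero: "b k \<noteq> (\<lambda>_. 0)"
  using ipha_step by blast

lemma x_Suc: "x (Suc k) = (\<lambda>\<xi>. x k \<xi> - (\<tau> k * \<alpha> k) *\<^sub>R (x k \<xi> - PN Xi p stg (xh k) \<xi>))"
  using ipha_step by blast

lemma w_Suc: "w (Suc k) = (\<lambda>\<xi>. w k \<xi> + (\<tau> k * \<alpha> k * r) *\<^sub>R PM Xi p stg (wh k) \<xi>)"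
  using ipha_step by blast

lemma x_in_NAsp_w_in_Msp: "x k \<in> NAsp Xi stg \<and> w k \<in> Msp Xi p stg"
proof (induction k)
  case 0
  then show ?case using run unfolding ipha_run_def by blast
next
  case (Suc k)
  have x_eq: "x (Suc k)
      = (\<lambda>\<xi>. (1 - \<tau> k * \<alpha> k) *\<^sub>R x k \<xi> + (\<tau> k * \<alpha> k) *\<^sub>R PN Xi p stg (xh k) \<xi>)"
    unfolding x_Suc by (simp add: fun_eq_iff algebra_simps)
  have w_eq: "w (Suc k) = (\<lambda>\<xi>. 1 *\<^sub>R w k \<xi> + (\<tau> k * \<alpha> k * r) *\<^sub>R PM Xi p stg (wh k) \<xi>)"
    unfolding w_Suc by simp
  show ?case
    unfolding x_eq w_eq using Suc.IH by (blast intro: NAsp_lincomb Msp_lincomb PN_in_NAsp PM_in_Msp)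
qed

lemma x_in_NAsp: "x k \<in> NAsp Xi stg" and w_in_Msp: "w k \<in> Msp Xi p stg"
  using x_in_NAsp_w_in_Msp by blast+

lemma a_in_Lsp: "a k \<in> Lsp Xi" and b_in_Lsp: "b k \<in> Lsp Xi"
  using x_in_NAsp[of k] NAsp_subset_Lsp unfolding Lsp_def by (auto simp: PN_outside PM_outside)

lemma a_minus_b: "(\<lambda>\<xi>. a k \<xi> - b k \<xi>) = (\<lambda>\<xi>. wh k \<xi> - xh k \<xi>)"
proof -
  have "(\<lambda>\<xi>. a k \<xi> - b k \<xi>) = (\<lambda>\<xi>. (PN Xi p stg (wh k) \<xi> - PN Xi p stg (xh k) \<xi>)
      + (PM Xi p stg (wh k) \<xi> - PM Xi p stg (xh k) \<xi>))"
    by (simp add: algebra_simps)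
  then show ?thesis by (simp only: PN_PM_diff wh_in_Lsp xh_in_Lsp)
qed

lemma ip_a_b_lower:
  "ip Xi p (a k) (b k) \<ge> (1 - sbar\<^sup>2) / 2 * (ip Xi p (a k) (a k) + ip Xi p (b k) (b k))"
proof -
  have "(\<sigma> k)\<^sup>2 \<le> sbar\<^sup>2" using sigma_bounds[of k] by (intro power_mono) auto
  then have "(\<sigma> k)\<^sup>2 * (ip Xi p (a k) (a k) + ip Xi p (b k) (b k))
      \<le> sbar\<^sup>2 * (ip Xi p (a k) (a k) + ip Xi p (b k) (b k))"
    using ip_self_nonneg[of "a k"] ip_self_nonneg[of "b k"] by (intro mult_right_mono) simp_all
  moreover have "ip Xi p (a k) (a k) - 2 * ip Xi p (a k) (b k) + ip Xi p (b k) (b k)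
      \<le> (\<sigma> k)\<^sup>2 * (ip Xi p (a k) (a k) + ip Xi p (b k) (b k))"
    using inexactness[of k] unfolding Lnorm_power2 a_minus_b[symmetric] ip_self_diff .
  ultimately show ?thesis by (simp add: field_simps)
qed

lemma ip_a_a_pos: "ip Xi p (a k) (a k) > 0"
proof (rule ccontr)
  assume "\<not> ip Xi p (a k) (a k) > 0"
  then have "a k = (\<lambda>_. 0)"
    using ip_self_nonneg[of "a k"] ip_self_eq_0_iff[OF a_in_Lsp, of k] by linarith
  then have "(1 - sbar\<^sup>2) / 2 * ip Xi p (b k) (b k) \<le> 0"
    using ip_a_b_lower[of k] by (simp add: ip_zero_left)
  moreover have "sbar\<^sup>2 < 1"
    using ipha_parameters by (simp add: power_less_one_iff abs_less_iff)
  ultimately have "ip Xi p (b k) (b k) = 0"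
    using ip_self_nonneg[of "b k"] by (simp add: mult_le_0_iff)
  then show False
    using ip_self_eq_0_iff[OF b_in_Lsp] b_nonzero by blast
qed

(* In ATAinv_iff the point u becomes wh k, and the condition is the IPHA subproblem. *)
lemma z_minus_b_in_ATAinv: "(\<lambda>\<xi>. z k \<xi> - b k \<xi>) \<in> ATAinv Xi p stg r F C (\<lambda>\<xi>. r *\<^sub>R a k \<xi>)"
proof -
  define nv where "nv = (\<lambda>\<xi>. r *\<^sub>R (x k \<xi> - PN Xi p stg (xh k) \<xi>))"
  define mv where "mv = (\<lambda>\<xi>. r *\<^sub>R PM Xi p stg (wh k) \<xi>)"
  define mz where "mz = (\<lambda>\<xi>. - (1/r) *\<^sub>R w k \<xi> - PM Xi p stg (xh k) \<xi>)"
  have N: "nv \<in> NAsp Xi stg" "PN Xi p stg (wh k) \<in> NAsp Xi stg"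
    unfolding nv_def by (simp_all add: NAsp_scaleR NAsp_diff x_in_NAsp PN_in_NAsp)
  have M: "mv \<in> Msp Xi p stg" "mz \<in> Msp Xi p stg"
    unfolding mv_def mz_def using Msp_lincomb[OF w_in_Msp PM_in_Msp, of "- (1/r)" k "- 1"]
    by (simp_all add: Msp_scaleR PM_in_Msp)
  have v: "(\<lambda>\<xi>. r *\<^sub>R a k \<xi>) = (\<lambda>\<xi>. nv \<xi> + mv \<xi>)"
    unfolding nv_def mv_def by (simp add: algebra_simps)
  have zb: "(\<lambda>\<xi>. z k \<xi> - b k \<xi>) = (\<lambda>\<xi>. PN Xi p stg (wh k) \<xi> + mz \<xi>)"
    unfolding mz_def by (simp add: fun_eq_iff algebra_simps)
  have u: "PN Xi p stg (wh k) \<xi> + (1/r) *\<^sub>R mv \<xi> = wh k \<xi>"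
    and g: "nv \<xi> + r *\<^sub>R mz \<xi> = r *\<^sub>R (x k \<xi> - xh k \<xi>) - w k \<xi>" for \<xi>
    using r_pos PN_plus_PM[OF wh_in_Lsp, of stg k \<xi>] PN_plus_PM[OF xh_in_Lsp, of stg k \<xi>]
    unfolding nv_def mv_def mz_def by (auto simp: algebra_simps simp flip: scaleR_right_distrib)
  have L: "(\<lambda>\<xi>. nv \<xi> + mv \<xi>) \<in> Lsp Xi" "(\<lambda>\<xi>. PN Xi p stg (wh k) \<xi> + mz \<xi>) \<in> Lsp Xi"
    using N M unfolding NAsp_def Msp_def Lsp_def by auto
  have "r \<noteq> 0" using r_pos by simp
  show ?thesis
    unfolding v zb ATAinv_iff[OF \<open>r \<noteq> 0\<close> L(1)] Let_def
    unfolding PN_add_NAsp_Msp[OF N(1) M(1)] PM_add_NAsp_Msp[OF N(1) M(1)]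
      PN_add_NAsp_Msp[OF N(2) M(2)] PM_add_NAsp_Msp[OF N(2) M(2)] u g
    using L(2) wh_ncone by blast
qed

lemma z_descent:
  assumes zs: "zs \<in> ATAinv Xi p stg r F C (\<lambda>_. 0)"
  shows "ip Xi p (\<lambda>\<xi>. z (Suc k) \<xi> - zs \<xi>) (\<lambda>\<xi>. z (Suc k) \<xi> - zs \<xi>)
    \<le> ip Xi p (\<lambda>\<xi>. z k \<xi> - zs \<xi>) (\<lambda>\<xi>. z k \<xi> - zs \<xi>)
       - (1 - \<theta>\<^sup>2) * ((1 - sbar\<^sup>2) / 2)\<^sup>2 * (ip Xi p (a k) (a k) + ip Xi p (b k) (b k))"
proof -
  define d where "d = (\<lambda>\<xi>. z k \<xi> - zs \<xi>)"
  define G where "G = ip Xi p (a k) (\<lambda>\<xi>. z k \<xi> - b k \<xi> - zs \<xi>)"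
  define t where "t = \<tau> k * (ip Xi p (a k) (b k) / ip Xi p (a k) (a k))"
  have "r * G = ip Xi p (\<lambda>\<xi>. r *\<^sub>R a k \<xi> - 0) (\<lambda>\<xi>. z k \<xi> - b k \<xi> - zs \<xi>)"
    unfolding G_def by (simp add: ip_scaleR_left)
  also have "\<dots> \<ge> 0"
    using r_pos a_in_Lsp zs z_minus_b_in_ATAinv
    by (intro ATAinv_monotone[OF F_mono]) (auto simp: Lsp_def)
  finally have "G \<ge> 0" using r_pos by (simp add: zero_le_mult_iff)
  have "d = (\<lambda>\<xi>. (z k \<xi> - b k \<xi> - zs \<xi>) + b k \<xi>)"
    unfolding d_def by (simp add: fun_eq_iff)
  then have "ip Xi p (a k) d = G + ip Xi p (a k) (b k)"
    unfolding G_def by (simp only: ip_add_right)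
  moreover have "(\<lambda>\<xi>. z (Suc k) \<xi> - zs \<xi>) = (\<lambda>\<xi>. d \<xi> - t *\<^sub>R a k \<xi>)"
    using r_pos unfolding x_Suc w_Suc t_def d_def Lnorm_power2 by (simp add: fun_eq_iff algebra_simps)
  ultimately have "ip Xi p (\<lambda>\<xi>. z (Suc k) \<xi> - zs \<xi>) (\<lambda>\<xi>. z (Suc k) \<xi> - zs \<xi>)
      = ip Xi p d d - (2 * t * (G + ip Xi p (a k) (b k)) - t\<^sup>2 * ip Xi p (a k) (a k))"
    by (simp only: ip_self_diff_scaleR)
  also have "\<dots> \<le> ip Xi p d d - (1 - \<theta>\<^sup>2) * ((1 - sbar\<^sup>2) / 2)\<^sup>2 * (ip Xi p (a k) (a k) + ip Xi p (b k) (b k))"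
    unfolding t_def using ip_a_a_pos[of k] ip_self_nonneg ip_a_b_lower[of k] tau_bounds[of k] ipha_parameters \<open>G \<ge> 0\<close>
    by (intro diff_left_mono relaxed_step_gain) (auto simp: abs_le_iff power_less_one_iff)
  finally show ?thesis unfolding d_def .
qed

lemma z_error_bound:
  assumes lip: "\<forall>v z'. v \<in> Lsp Xi \<and> z' \<in> ATAinv Xi p stg r F C v \<and> Lnorm Xi p v \<le> \<eta> \<longrightarrow>
      Lnorm Xi p (\<lambda>\<xi>. z' \<xi> - zs \<xi>) \<le> L * Lnorm Xi p v"
    and "\<eta> \<ge> 0" and small: "ip Xi p (a k) (a k) + ip Xi p (b k) (b k) \<le> (\<eta> / r)\<^sup>2"
  shows "ip Xi p (\<lambda>\<xi>. z k \<xi> - zs \<xi>) (\<lambda>\<xi>. z k \<xi> - zs \<xi>)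
    \<le> 2 * (1 + L\<^sup>2 * r\<^sup>2) * (ip Xi p (a k) (a k) + ip Xi p (b k) (b k))"
proof -
  define v where "v = (\<lambda>\<xi>. r *\<^sub>R a k \<xi>)"
  define d where "d = (\<lambda>\<xi>. z k \<xi> - b k \<xi> - zs \<xi>)"
  have Lnorm_v: "Lnorm Xi p v = r * Lnorm Xi p (a k)"
    unfolding v_def Lnorm_scaleR using r_pos by simp
  have "Lnorm Xi p (a k) \<le> \<eta> / r"
    using small ip_self_nonneg[of "b k"] r_pos \<open>\<eta> \<ge> 0\<close> real_sqrt_le_mono[of "ip Xi p (a k) (a k)" "(\<eta> / r)\<^sup>2"]
    unfolding Lnorm_def by (simp add: real_sqrt_abs)
  then have "Lnorm Xi p v \<le> \<eta>"
    using r_pos unfolding Lnorm_v by (simp add: field_simps)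
  moreover have "v \<in> Lsp Xi"
    using a_in_Lsp[of k] unfolding v_def Lsp_def by simp
  ultimately have "Lnorm Xi p d \<le> L * Lnorm Xi p v"
    using lip z_minus_b_in_ATAinv unfolding v_def d_def by blast
  then have "(Lnorm Xi p d)\<^sup>2 \<le> (L * Lnorm Xi p v)\<^sup>2"
    by (intro power_mono) (simp_all add: Lnorm_def ip_self_nonneg)
  then have "ip Xi p d d \<le> L\<^sup>2 * r\<^sup>2 * ip Xi p (a k) (a k)"
    unfolding Lnorm_v Lnorm_power2 power_mult_distrib by (simp add: Lnorm_power2 mult.assoc)
  moreover have "(\<lambda>\<xi>. z k \<xi> - zs \<xi>) = (\<lambda>\<xi>. d \<xi> + b k \<xi>)"
    unfolding d_def by (simp add: fun_eq_iff)
  then have "ip Xi p (\<lambda>\<xi>. z k \<xi> - zs \<xi>) (\<lambda>\<xi>. z k \<xi> - zs \<xi>) \<le> 2 * ip Xi p d d + 2 * ip Xi p (b k) (b k)"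
    by (simp only: ip_self_add_le)
  ultimately show ?thesis
    using ip_self_nonneg[of "a k"] ip_self_nonneg[of "b k"]
    by (simp add: algebra_simps) (smt (verit) mult_nonneg_nonneg zero_le_power2)
qed

lemma Mr_norm_eq_Lnorm_z:
  assumes "zs \<in> Lsp Xi"
  shows "Mr_norm Xi p r (\<lambda>\<xi>. x k \<xi> - PN Xi p stg zs \<xi>) (\<lambda>\<xi>. w k \<xi> - (- r) *\<^sub>R PM Xi p stg zs \<xi>)
    = Lnorm Xi p (\<lambda>\<xi>. z k \<xi> - zs \<xi>)"
proof -
  have "Mr_norm Xi p r (\<lambda>\<xi>. x k \<xi> - PN Xi p stg zs \<xi>) (\<lambda>\<xi>. w k \<xi> - (- r) *\<^sub>R PM Xi p stg zs \<xi>)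
    = Lnorm Xi p (\<lambda>\<xi>. (x k \<xi> - PN Xi p stg zs \<xi>) - (1/r) *\<^sub>R (w k \<xi> - (- r) *\<^sub>R PM Xi p stg zs \<xi>))"
    using r_pos
    by (intro Mr_norm_eq_Lnorm[where stg = stg] NAsp_diff x_in_NAsp PN_in_NAsp Msp_diff w_in_Msp
        Msp_scaleR PM_in_Msp) simp
  also have "(\<lambda>\<xi>. (x k \<xi> - PN Xi p stg zs \<xi>) - (1/r) *\<^sub>R (w k \<xi> - (- r) *\<^sub>R PM Xi p stg zs \<xi>))
      = (\<lambda>\<xi>. z k \<xi> - (PN Xi p stg zs \<xi> + PM Xi p stg zs \<xi>))"
    using r_pos by (simp add: fun_eq_iff algebra_simps)
  also have "\<dots> = (\<lambda>\<xi>. z k \<xi> - zs \<xi>)"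
    by (simp only: PN_plus_PM assms)
  finally show ?thesis .
qed

lemma z_linear_convergence:
  assumes zs: "zs \<in> ATAinv Xi p stg r F C (\<lambda>_. 0)" and "\<eta> > 0"
    and lip: "\<forall>v z'. v \<in> Lsp Xi \<and> z' \<in> ATAinv Xi p stg r F C v \<and> Lnorm Xi p v \<le> \<eta> \<longrightarrow>
      Lnorm Xi p (\<lambda>\<xi>. z' \<xi> - zs \<xi>) \<le> L * Lnorm Xi p v"
  shows "(\<lambda>k. Lnorm Xi p (\<lambda>\<xi>. z k \<xi> - zs \<xi>)) \<longlonglongrightarrow> 0"
    and "\<exists>q. 0 \<le> q \<and> q < 1 \<and> (\<exists>k0. \<forall>k\<ge>k0.
      Lnorm Xi p (\<lambda>\<xi>. z (Suc k) \<xi> - zs \<xi>) \<le> q * Lnorm Xi p (\<lambda>\<xi>. z k \<xi> - zs \<xi>))"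
proof -
  define E where "E k = ip Xi p (\<lambda>\<xi>. z k \<xi> - zs \<xi>) (\<lambda>\<xi>. z k \<xi> - zs \<xi>)" for k
  define e where "e k = ip Xi p (a k) (a k) + ip Xi p (b k) (b k)" for k
  define \<kappa> where "\<kappa> = (1 - \<theta>\<^sup>2) * ((1 - sbar\<^sup>2) / 2)\<^sup>2"
  have "sbar\<^sup>2 < 1" and "\<theta>\<^sup>2 < 1"
    using ipha_parameters by (simp_all add: power_less_one_iff abs_less_iff)
  then have "\<kappa> > 0" unfolding \<kappa>_def by simp
  have E_nonneg: "E k \<ge> 0" for k
    unfolding E_def by (rule ip_self_nonneg)
  have e_nonneg: "e k \<ge> 0" for k
    unfolding e_def by (rule add_nonneg_nonneg[OF ip_self_nonneg ip_self_nonneg])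
  have E_descent: "E (Suc k) \<le> E k - \<kappa> * e k" for k
    unfolding E_def e_def \<kappa>_def by (rule z_descent[OF zs])
  have E_error_bound: "E k \<le> (2 * (1 + L\<^sup>2 * r\<^sup>2)) * e k" if "e k \<le> (\<eta> / r)\<^sup>2" for k
    using z_error_bound[OF lip less_imp_le[OF \<open>\<eta> > 0\<close>] that[unfolded e_def]] unfolding E_def e_def .
  have bounds_pos: "(\<eta> / r)\<^sup>2 > 0" "2 * (1 + L\<^sup>2 * r\<^sup>2) > 0"
    using \<open>\<eta> > 0\<close> r_pos by (simp_all add: add_pos_nonneg)
  have "(\<lambda>k. sqrt (E k)) \<longlonglongrightarrow> 0"
    and "\<exists>q. 0 \<le> q \<and> q < 1 \<and> (\<exists>k0. \<forall>k\<ge>k0. sqrt (E (Suc k)) \<le> q * sqrt (E k))"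
    by (rule linear_convergence_of_descent_and_error_bound[of E e \<kappa> "(\<eta> / r)\<^sup>2" "2 * (1 + L\<^sup>2 * r\<^sup>2)"];
        fact E_nonneg e_nonneg \<open>\<kappa> > 0\<close> E_descent bounds_pos E_error_bound)+
  then show "(\<lambda>k. Lnorm Xi p (\<lambda>\<xi>. z k \<xi> - zs \<xi>)) \<longlonglongrightarrow> 0"
    and "\<exists>q. 0 \<le> q \<and> q < 1 \<and> (\<exists>k0. \<forall>k\<ge>k0.
      Lnorm Xi p (\<lambda>\<xi>. z (Suc k) \<xi> - zs \<xi>) \<le> q * Lnorm Xi p (\<lambda>\<xi>. z k \<xi> - zs \<xi>))"
    unfolding E_def Lnorm_def .
qed

end

theorem corollary2:
  fixes Xi :: "(nat \<Rightarrow> 'e) set" and p :: "(nat \<Rightarrow> 'e) \<Rightarrow> real"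
    and N :: nat and stg :: "'n::finite \<Rightarrow> nat" and r :: real
    and F :: "real^'n \<Rightarrow> (nat \<Rightarrow> 'e) \<Rightarrow> real^'n" and C :: "(nat \<Rightarrow> 'e) \<Rightarrow> (real^'n) set"
    and sbar \<theta> :: real and \<sigma> \<tau> :: "nat \<Rightarrow> real"
    and x w xh wh :: "nat \<Rightarrow> (nat \<Rightarrow> 'e) \<Rightarrow> real^'n"
  assumes "finite Xi" and "Xi \<noteq> {}"
    and "\<forall>\<xi>\<in>Xi. p \<xi> > 0"
    and "\<forall>\<xi>\<in>Xi. \<forall>\<xi>'\<in>Xi. (\<forall>i\<in>{1..N}. \<xi> i = \<xi>' i) \<longrightarrow> \<xi> = \<xi>'"
    and "\<forall>k. 1 \<le> stg k \<and> stg k \<le> N"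
    and "\<forall>\<xi>\<in>Xi. C \<xi> \<noteq> {} \<and> closed (C \<xi>) \<and> convex (C \<xi>)"
    and "\<forall>\<xi>\<in>Xi. continuous_on UNIV (\<lambda>u. F u \<xi>)"
    and "\<forall>\<xi>\<in>Xi. \<forall>u v. (F u \<xi> - F v \<xi>) \<bullet> (u - v) \<ge> 0"
    and "r > 0"
    and "lipschitz_at_zero Xi p (ATAinv Xi p stg r F C)"
    and "ipha_run Xi p stg r F C sbar \<theta> \<sigma> \<tau> x w xh wh"
  shows "\<exists>xs ws. svi_solution Xi p stg F C xs ws \<and>
           ((\<lambda>k. Mr_norm Xi p r (\<lambda>\<xi>. x k \<xi> - xs \<xi>) (\<lambda>\<xi>. w k \<xi> - ws \<xi>)) \<longlonglongrightarrow> 0) \<and>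
           (\<exists>q. 0 \<le> q \<and> q < 1 \<and> (\<exists>K. \<forall>k\<ge>K.
              Mr_norm Xi p r (\<lambda>\<xi>. x (Suc k) \<xi> - xs \<xi>) (\<lambda>\<xi>. w (Suc k) \<xi> - ws \<xi>)
              \<le> q * Mr_norm Xi p r (\<lambda>\<xi>. x k \<xi> - xs \<xi>) (\<lambda>\<xi>. w k \<xi> - ws \<xi>)))"
proof -
  interpret ipha Xi p stg r F C sbar \<theta> \<sigma> \<tau> x w xh wh
    using assms by unfold_locales auto
  obtain zs L \<eta> where zs0: "ATAinv Xi p stg r F C (\<lambda>_. 0) = {zs}" and "\<eta> > 0"
    and lip: "\<forall>v z. v \<in> Lsp Xi \<and> z \<in> ATAinv Xi p stg r F C v \<and> Lnorm Xi p v \<le> \<eta> \<longrightarrow>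
        Lnorm Xi p (\<lambda>\<xi>. z \<xi> - zs \<xi>) \<le> L * Lnorm Xi p v"
    using assms(10) unfolding lipschitz_at_zero_def by blast
  have zs: "zs \<in> ATAinv Xi p stg r F C (\<lambda>_. 0)" using zs0 by simp
  then have "zs \<in> Lsp Xi" by (simp add: ATAinv_def)
  define xs where "xs = PN Xi p stg zs"
  define ws where "ws = (\<lambda>\<xi>. (- r) *\<^sub>R PM Xi p stg zs \<xi>)"
  have Mr: "Mr_norm Xi p r (\<lambda>\<xi>. x k \<xi> - xs \<xi>) (\<lambda>\<xi>. w k \<xi> - ws \<xi>) = Lnorm Xi p (\<lambda>\<xi>. z k \<xi> - zs \<xi>)"
    for k
    unfolding xs_def ws_def by (rule Mr_norm_eq_Lnorm_z[OF \<open>zs \<in> Lsp Xi\<close>])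
  have "svi_solution Xi p stg F C xs ws"
    unfolding xs_def ws_def using r_pos by (intro svi_solution_of_ATAinv_zero zs) simp
  with z_linear_convergence[OF zs \<open>\<eta> > 0\<close> lip] show ?thesis
    unfolding Mr[symmetric] by blast
qed

end
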